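(* Let $n$ be a positive integer and let $C$ be a connected component of $\Gamma(\mathsf{hypo}_n)$, with highest weight vertex $h$ and lowest weight vertex $l$. Then there is an automorphism of $C$ as an unlabelled undirected graph that maps $h$ to $l$.
   Context: Words are over the alphabet $\{1,\dots,n\}$. Quasi-Kashiwara operators for $1\le i\le n-1$: if a word $u$ contains a (not necessarily consecutive) subsequence $(i+1)\,i$, then $e_i(u)$ and $f_i(u)$ are undefined; otherwise $e_i(u)$ replaces the leftmost $i+1$ of $u$ by $i$ (undefined if there is no $i+1$) and $f_i(u)$ replaces the rightmost $i$ by $i+1$ (undefined if there is no $i$). $\Gamma(\mathsf{hypo}_n)$ is the directed graph with vertex set all words over $\{1,\dots,n\}$ and an edge $u\to f_i(u)$ labelled $i$ whenever $f_i(u)$ is defined. A highest weight vertex is one on which no $e_i$ is defined, and a lowest weight vertex is one on which no $f_i$ is defined; each connected component of $\Gamma(\mathsf{hypo}_n)$ has exactly one of each. *)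

theory Defs
  imports Main
begin

definition is_word :: "nat \<Rightarrow> nat list \<Rightarrow> bool" where
  "is_word n u \<longleftrightarrow> set u \<subseteq> {1..n}"

definition has_pattern :: "nat \<Rightarrow> nat list \<Rightarrow> bool" where
  "has_pattern i u \<longleftrightarrow> (\<exists>j k. j < k \<and> k < length u \<and> u ! j = i + 1 \<and> u ! k = i)"

definition e_op :: "nat \<Rightarrow> nat \<Rightarrow> nat list \<Rightarrow> nat list option" where
  "e_op n i u =
     (if 1 \<le> i \<and> i \<le> n - 1 \<and> \<not> has_pattern i u \<and> (i + 1) \<in> set u
      then Some (u[(LEAST j. j < length u \<and> u ! j = i + 1) := i])
      else None)"

definition f_op :: "nat \<Rightarrow> nat \<Rightarrow> nat list \<Rightarrow> nat list option" where
  "f_op n i u =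
     (if 1 \<le> i \<and> i \<le> n - 1 \<and> \<not> has_pattern i u \<and> i \<in> set u
      then Some (u[(GREATEST j. j < length u \<and> u ! j = i) := i + 1])
      else None)"

definition hypo_edge :: "nat \<Rightarrow> nat list \<Rightarrow> nat list \<Rightarrow> bool" where
  "hypo_edge n u v \<longleftrightarrow> is_word n u \<and> (\<exists>i. 1 \<le> i \<and> i \<le> n - 1 \<and> f_op n i u = Some v)"

definition hypo_adj :: "nat \<Rightarrow> nat list \<Rightarrow> nat list \<Rightarrow> bool" where
  "hypo_adj n u v \<longleftrightarrow> hypo_edge n u v \<or> hypo_edge n v u"

definition hypo_component :: "nat \<Rightarrow> nat list set \<Rightarrow> bool" where
  "hypo_component n C \<longleftrightarrow>
     (\<exists>u. is_word n u \<and> C = {v. (u, v) \<in> {(x, y). hypo_adj n x y}\<^sup>*})"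

definition highest_weight :: "nat \<Rightarrow> nat list \<Rightarrow> bool" where
  "highest_weight n u \<longleftrightarrow> (\<forall>i. 1 \<le> i \<and> i \<le> n - 1 \<longrightarrow> e_op n i u = None)"

definition lowest_weight :: "nat \<Rightarrow> nat list \<Rightarrow> bool" where
  "lowest_weight n u \<longleftrightarrow> (\<forall>i. 1 \<le> i \<and> i \<le> n - 1 \<longrightarrow> f_op n i u = None)"

definition is_undirected_aut :: "nat \<Rightarrow> nat list set \<Rightarrow> (nat list \<Rightarrow> nat list) \<Rightarrow> bool" where
  "is_undirected_aut n C \<phi> \<longleftrightarrow> bij_betw \<phi> C C \<and>
     (\<forall>u\<in>C. \<forall>v\<in>C. hypo_adj n u v \<longleftrightarrow> hypo_adj n (\<phi> u) (\<phi> v))"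

end

theory Submission
  imports Defs "HOL-Library.Product_Lexorder"
begin

(* Order the positions of a word by letter, breaking ties from left to right. Raising an
   operator f_i never changes this order, so every word in the component of the highest
   weight word h induces the same order as h; moreover an edge raises a single letter by one,
   and conversely every such one-letter raise between two words inducing this order is an
   edge. Reading letters in the rank order of h and subtracting the letters of h, a word of
   the component becomes a weakly increasing sequence with values in 0..t, where
   t = n - max h, and the edges become unit increments. Reversing such a sequence and
   complementing its values with respect to t is an involution that preserves unit
   increments, hence an automorphism of the component; it maps h, the zero sequence, to the
   constant sequence t, which is the lowest weight word. *)

section \<open>Involutions of a connected component\<close>

lemma rtrancl_closed_set:
  assumes "(a, b) \<in> {(x, y). adj x y}\<^sup>*" "a \<in> W" "\<And>x y. x \<in> W \<Longrightarrow> adj x y \<Longrightarrow> y \<in> W"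
  shows "b \<in> W"
  using assms(1,2) by (induction rule: rtrancl_induct) (auto intro: assms(3))

lemma involution_automorphism_of_reach_set:
  fixes adj :: "'a \<Rightarrow> 'a \<Rightarrow> bool" and \<phi> :: "'a \<Rightarrow> 'a" and x :: 'a
  defines "C \<equiv> {v. (x, v) \<in> {(a, b). adj a b}\<^sup>*}"
  assumes closed: "\<And>a b. a \<in> W \<Longrightarrow> adj a b \<Longrightarrow> b \<in> W" and x: "x \<in> W"
    and involution: "\<And>a. a \<in> W \<Longrightarrow> \<phi> (\<phi> a) = a"
    and hom: "\<And>a b. a \<in> W \<Longrightarrow> b \<in> W \<Longrightarrow> adj a b \<Longrightarrow> adj (\<phi> a) (\<phi> b)"
    and image: "\<phi> x \<in> C"
  shows "bij_betw \<phi> C C \<and> (\<forall>u\<in>C. \<forall>v\<in>C. adj u v \<longleftrightarrow> adj (\<phi> u) (\<phi> v))"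
proof -
  have C_W: "v \<in> W" if "v \<in> C" for v
    using rtrancl_closed_set[of x v adj W] that x closed by (simp add: C_def)
  have "(\<phi> x, \<phi> v) \<in> {(a, b). adj a b}\<^sup>*" if "(x, v) \<in> {(a, b). adj a b}\<^sup>*" for v
    using that
  proof (induction rule: rtrancl_induct)
    case (step v w)
    then have "v \<in> W" "w \<in> W"
      using C_W closed by (auto simp: C_def)
    with step show ?case
      by (auto intro: rtrancl_into_rtrancl hom)
  qed simp
  then have C_closed: "\<phi> v \<in> C" if "v \<in> C" for v
    using image that by (auto simp: C_def intro: rtrancl_trans)
  have "bij_betw \<phi> C C"
    by (rule bij_betw_byWitness[where f' = \<phi>]) (auto simp: involution C_W C_closed)
  moreover have "adj u v \<longleftrightarrow> adj (\<phi> u) (\<phi> v)" if "u \<in> C" "v \<in> C" for u v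
    using hom[of u v] hom[of "\<phi> u" "\<phi> v"] that C_W C_closed involution by auto
  ultimately show ?thesis
    by blast
qed

section \<open>Standardization of words\<close>

lemma strict_mono_on_lessThan_iff_Suc:
  fixes f :: "nat \<Rightarrow> 'a::order"
  shows "strict_mono_on {..<m} f \<longleftrightarrow> (\<forall>k. Suc k < m \<longrightarrow> f k < f (Suc k))"
proof -
  have "strict_mono_on {..<m} f \<longleftrightarrow> sorted_wrt (<) (map f [0..<m])"
    by (auto simp: strict_mono_on_def sorted_wrt_iff_nth_less)
  also have "\<dots> \<longleftrightarrow> (\<forall>k. Suc k < m \<longrightarrow> f k < f (Suc k))"
    by (subst sorted_wrt_iff_nth_Suc_transp) (auto simp: transp_def nth_append)
  finally show ?thesis .
qed

definition pos_of_rank :: "nat list \<Rightarrow> nat \<Rightarrow> nat" where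
  "pos_of_rank h k = sort_key (\<lambda>p. (h ! p, p)) [0..<length h] ! k"

lemma bij_pos_of_rank: "bij_betw (pos_of_rank h) {..<length h} {..<length h}"
proof -
  have "bij_betw ((!) (sort_key (\<lambda>p. (h ! p, p)) [0..<length h])) {..<length h} {..<length h}"
    by (rule bij_betw_nth) auto
  then show ?thesis
    by (simp add: pos_of_rank_def[abs_def])
qed

lemma pos_of_rank_less_length: "k < length h \<Longrightarrow> pos_of_rank h k < length h"
  using bij_betw_apply[OF bij_pos_of_rank] by blast

lemma pos_of_rank_inject:
  "j < length h \<Longrightarrow> k < length h \<Longrightarrow> pos_of_rank h j = pos_of_rank h k \<longleftrightarrow> j = k"
  using bij_betw_imp_inj_on[OF bij_pos_of_rank] by (auto dest: inj_onD)

lemma pos_of_rank_surj: "p < length h \<Longrightarrow> \<exists>k<length h. pos_of_rank h k = p"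
  using bij_betw_imp_surj_on[OF bij_pos_of_rank] by (metis imageE lessThan_iff)

lemma strict_mono_pos_of_rank:
  "strict_mono_on {..<length h} (\<lambda>k. (h ! pos_of_rank h k, pos_of_rank h k))"
proof -
  let ?xs = "sort_key (\<lambda>p. (h ! p, p)) [0..<length h]"
  have "sorted_wrt (<) (map (\<lambda>p. (h ! p, p)) ?xs)"
    unfolding strict_sorted_iff by (auto simp: distinct_map inj_on_def)
  then show ?thesis
    by (auto simp: strict_mono_on_def sorted_wrt_iff_nth_less pos_of_rank_def)
qed

definition same_std :: "nat list \<Rightarrow> nat list \<Rightarrow> bool" where
  "same_std u v \<longleftrightarrow> length u = length v \<and>
     (\<forall>p<length u. \<forall>q<length u. (u ! p, p) < (u ! q, q) \<longleftrightarrow> (v ! p, p) < (v ! q, q))"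

lemma same_std_refl: "same_std u u"
  by (simp add: same_std_def)

lemma same_std_length: "same_std u v \<Longrightarrow> length u = length v"
  by (simp add: same_std_def)

lemma same_std_sym: "same_std u v \<Longrightarrow> same_std v u"
  by (simp add: same_std_def)

lemma same_std_trans: "same_std u v \<Longrightarrow> same_std v w \<Longrightarrow> same_std u w"
  by (simp add: same_std_def)

lemma same_std_iff_strict_mono:
  "same_std h u \<longleftrightarrow> length u = length h \<and>
     strict_mono_on {..<length h} (\<lambda>k. (u ! pos_of_rank h k, pos_of_rank h k))"
  (is "_ \<longleftrightarrow> _ \<and> strict_mono_on _ ?key")
proof
  assume "same_std h u"
  then show "length u = length h \<and> strict_mono_on {..<length h} ?key"
    using strict_mono_pos_of_rank[of h] pos_of_rank_less_length[of _ h]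
    by (auto simp: same_std_def strict_mono_on_def)
next
  assume u: "length u = length h \<and> strict_mono_on {..<length h} ?key"
  have key_iff: "(h ! pos_of_rank h j, pos_of_rank h j) < (h ! pos_of_rank h k, pos_of_rank h k)
      \<longleftrightarrow> ?key j < ?key k" if "j < length h" "k < length h" for j k
  proof -
    have "(h ! pos_of_rank h j, pos_of_rank h j) < (h ! pos_of_rank h k, pos_of_rank h k)
        \<longleftrightarrow> j < k"
      by (rule strict_mono_on_less[OF strict_mono_pos_of_rank]) (use that in auto)
    moreover have "?key j < ?key k \<longleftrightarrow> j < k"
      by (rule strict_mono_on_less) (use u that in auto)
    ultimately show ?thesis by (simp only:)
  qed
  show "same_std h u"
    unfolding same_std_def
  proof (intro conjI allI impI)
    fix p q assume "p < length h" "q < length h"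
    then obtain j k where "j < length h" "k < length h" "p = pos_of_rank h j" "q = pos_of_rank h k"
      using pos_of_rank_surj by metis
    with key_iff show "(h ! p, p) < (h ! q, q) \<longleftrightarrow> (u ! p, p) < (u ! q, q)"
      by blast
  qed (use u in simp)
qed

definition descent :: "nat list \<Rightarrow> nat \<Rightarrow> nat" where
  "descent h k = of_bool (pos_of_rank h (Suc k) < pos_of_rank h k)"

lemma same_std_iff_steps:
  "same_std h u \<longleftrightarrow> length u = length h \<and>
     (\<forall>k. Suc k < length h \<longrightarrow> u ! pos_of_rank h k + descent h k \<le> u ! pos_of_rank h (Suc k))"
proof -
  have "(u ! pos_of_rank h k, pos_of_rank h k) < (u ! pos_of_rank h (Suc k), pos_of_rank h (Suc k))
      \<longleftrightarrow> u ! pos_of_rank h k + descent h k \<le> u ! pos_of_rank h (Suc k)"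
    if "Suc k < length h" for k
    using pos_of_rank_inject[of k h "Suc k"] that by (auto simp: descent_def)
  then show ?thesis
    by (auto simp: same_std_iff_strict_mono strict_mono_on_lessThan_iff_Suc)
qed

lemma same_std_rank_mono:
  assumes "same_std h u" "j \<le> k" "k < length h"
  shows "u ! pos_of_rank h j \<le> u ! pos_of_rank h k"
    and "u ! pos_of_rank h j = u ! pos_of_rank h k \<Longrightarrow> pos_of_rank h j \<le> pos_of_rank h k"
  using strict_mono_on_leD[of "{..<length h}" "\<lambda>k. (u ! pos_of_rank h k, pos_of_rank h k)" j k]
    assms by (auto simp: same_std_iff_strict_mono)

section \<open>Edges as one-letter raises\<close>

lemma f_op_SomeE:
  assumes "f_op n i u = Some v"
  obtains p where "p < length u" "u ! p = i" "v = u[p := Suc i]"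
    and "\<And>q. p < q \<Longrightarrow> q < length u \<Longrightarrow> u ! q \<noteq> i"
    and "1 \<le> i" "i < n" "\<not> has_pattern i u"
proof -
  define p where "p = (GREATEST j. j < length u \<and> u ! j = i)"
  have i: "1 \<le> i" "i < n" "\<not> has_pattern i u" "i \<in> set u" and v: "v = u[p := Suc i]"
    using assms by (auto simp: f_op_def p_def split: if_splits)
  obtain j where j: "j < length u" "u ! j = i"
    using i(4) by (auto simp: in_set_conv_nth)
  have "p < length u \<and> u ! p = i"
    unfolding p_def by (rule GreatestI_nat[of _ j "length u"]) (use j in auto)
  moreover have "u ! q \<noteq> i" if "p < q" "q < length u" for q
  proof
    assume "u ! q = i"
    then have "q \<le> p"
      unfolding p_def by (intro Greatest_le_nat[of _ q "length u"]) (use that in auto)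
    with \<open>p < q\<close> show False by simp
  qed
  ultimately show ?thesis
    using that i v by blast
qed

lemma f_op_same_std:
  assumes "f_op n i u = Some v"
  shows "same_std u v"
proof -
  obtain p where p: "p < length u" "u ! p = i" "v = u[p := Suc i]"
    and last: "\<And>q. p < q \<Longrightarrow> q < length u \<Longrightarrow> u ! q \<noteq> i"
    and pat: "\<not> has_pattern i u"
    using f_op_SomeE[OF assms] by metis
  have "(u ! a, a) < (u ! b, b) \<longleftrightarrow> (v ! a, a) < (v ! b, b)"
    if "a < length u" "b < length u" for a b
    using that p last[of a] last[of b] pat[unfolded has_pattern_def, simplified, rule_format, of a p]
      pat[unfolded has_pattern_def, simplified, rule_format, of b p]
    by (cases "a = p"; cases "b = p") (auto simp: nat_neq_iff le_Suc_eq)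
  then show ?thesis
    using p by (simp add: same_std_def)
qed

lemma f_op_increment:
  assumes std: "same_std u v" and p: "p < length u" and v: "v = u[p := Suc (u ! p)]"
    and range: "1 \<le> u ! p" "Suc (u ! p) \<le> n"
  shows "f_op n (u ! p) u = Some v"
proof -
  let ?i = "u ! p"
  have key: "(u ! a, a) < (u ! b, b) \<longleftrightarrow> (v ! a, a) < (v ! b, b)"
    if "a < length u" "b < length u" for a b
    using std that by (simp add: same_std_def)
  have last: "q \<le> p" if "q < length u" "u ! q = ?i" for q
    using key[OF p that(1)] that v by (cases "q = p") auto
  have "\<not> has_pattern ?i u"
    unfolding has_pattern_def
  proof clarify
    fix a b assume "a < b" "b < length u" "u ! a = ?i + 1" "u ! b = ?i"
    \<comment> \<open>since a < b \<le> p, raising the letter at p moves it past the letter u ! p + 1 at a\<close>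
    then show False
      using key[OF p, of a] last[of b] v p by auto
  qed
  moreover have "(GREATEST q. q < length u \<and> u ! q = ?i) = p"
    by (rule Greatest_equality) (use p last in auto)
  ultimately show ?thesis
    using range p v by (auto simp: f_op_def)
qed

lemma is_word_nth: "is_word n u \<Longrightarrow> p < length u \<Longrightarrow> 1 \<le> u ! p \<and> u ! p \<le> n"
  unfolding is_word_def using nth_mem by fastforce

lemma is_word_update: "is_word n u \<Longrightarrow> 1 \<le> x \<Longrightarrow> x \<le> n \<Longrightarrow> is_word n (u[p := x])"
  using set_update_subset_insert[of u p x] by (auto simp: is_word_def)

lemma hypo_edge_iff_increment:
  assumes "is_word n u" "is_word n v" "same_std u v"
  shows "hypo_edge n u v \<longleftrightarrow> (\<exists>p<length u. v = u[p := Suc (u ! p)])"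
proof
  assume "hypo_edge n u v"
  then obtain i where "f_op n i u = Some v"
    by (auto simp: hypo_edge_def)
  then show "\<exists>p<length u. v = u[p := Suc (u ! p)]"
    by (elim f_op_SomeE) auto
next
  assume "\<exists>p<length u. v = u[p := Suc (u ! p)]"
  then obtain p where p: "p < length u" and v: "v = u[p := Suc (u ! p)]"
    by blast
  have "1 \<le> u ! p" "Suc (u ! p) \<le> n"
    using is_word_nth[OF assms(1) p] is_word_nth[OF assms(2), of p] p v by auto
  then show "hypo_edge n u v"
    using f_op_increment[OF assms(3) p v] assms(1) by (auto simp: hypo_edge_def)
qed

lemma hypo_adj_is_word: "is_word n u \<Longrightarrow> hypo_adj n u v \<Longrightarrow> is_word n v"
  by (auto simp: hypo_adj_def hypo_edge_def elim!: f_op_SomeE intro!: is_word_update)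

lemma hypo_adj_same_std: "hypo_adj n u v \<Longrightarrow> same_std u v"
  by (auto simp: hypo_adj_def hypo_edge_def intro: f_op_same_std same_std_sym)

lemma hypo_component_generated_by_member:
  assumes "hypo_component n C" "h \<in> C"
  shows "is_word n h" "C = {v. (h, v) \<in> {(a, b). hypo_adj n a b}\<^sup>*}"
proof -
  let ?R = "{(a, b). hypo_adj n a b}"
  obtain u where u: "is_word n u" "C = {v. (u, v) \<in> ?R\<^sup>*}"
    using assms(1) by (auto simp: hypo_component_def)
  then have uh: "(u, h) \<in> ?R\<^sup>*"
    using assms(2) by simp
  show "is_word n h"
    using rtrancl_closed_set[of u h "hypo_adj n" "Collect (is_word n)"] uh u(1) hypo_adj_is_word
    by blast
  have "sym ?R"
    by (auto simp: sym_def hypo_adj_def)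
  then have "(h, u) \<in> ?R\<^sup>*"
    using uh by (meson sym_rtrancl symD)
  then show "C = {v. (h, v) \<in> ?R\<^sup>*}"
    using u(2) uh by (auto intro: rtrancl_trans)
qed

section \<open>Highest and lowest weight words\<close>

lemma highest_weight_has_pattern:
  assumes "highest_weight n u" "1 \<le> i" "i < n" "Suc i \<in> set u"
  shows "has_pattern i u"
proof (rule ccontr)
  assume "\<not> has_pattern i u"
  then have "e_op n i u \<noteq> None"
    using assms(2-4) by (simp add: e_op_def)
  then show False
    using assms(1-3) by (simp add: highest_weight_def)
qed

lemma lowest_weight_has_pattern:
  assumes "lowest_weight n u" "1 \<le> i" "i < n" "i \<in> set u"
  shows "has_pattern i u"
proof (rule ccontr)
  assume "\<not> has_pattern i u"
  then have "f_op n i u \<noteq> None"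
    using assms(2-4) by (simp add: f_op_def)
  then show False
    using assms(1-3) by (simp add: lowest_weight_def)
qed

lemma not_has_pattern_if_absent: "i \<notin> set u \<or> Suc i \<notin> set u \<Longrightarrow> \<not> has_pattern i u"
  unfolding has_pattern_def by (metis Suc_eq_plus1 nth_mem order.strict_trans)

lemma no_pattern_at_rank_gap:
  assumes std: "same_std h u" and k: "Suc k < length h"
    and gap: "u ! pos_of_rank h k + descent h k < u ! pos_of_rank h (Suc k)"
    and i: "u ! pos_of_rank h k \<le> i" "i < u ! pos_of_rank h (Suc k)"
  shows "\<not> has_pattern i u"
proof
  assume "has_pattern i u"
  then obtain a b where ab: "a < b" "b < length u" "u ! a = Suc i" "u ! b = i"
    unfolding has_pattern_def by auto
  have len: "length u = length h"
    using std by (simp add: same_std_def)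
  obtain ja jb where ja: "ja < length h" "pos_of_rank h ja = a"
    and jb: "jb < length h" "pos_of_rank h jb = b"
    using pos_of_rank_surj ab len by (metis order.strict_trans)
  note mono = same_std_rank_mono[OF std]
  have "jb \<le> k"
    using mono(1)[of "Suc k" jb] jb ab i by (cases "jb \<le> k") auto
  then have at_k: "u ! pos_of_rank h k = i" "b \<le> pos_of_rank h k"
    using mono[of jb k] jb ab i k by auto
  have "Suc k \<le> ja"
    using mono(1)[of ja k] ja ab i k by (cases "Suc k \<le> ja") auto
  then have at_Suc_k: "u ! pos_of_rank h (Suc k) = Suc i" "pos_of_rank h (Suc k) \<le> a"
    using mono[of "Suc k" ja] ja ab i by auto
  have "pos_of_rank h k \<noteq> pos_of_rank h (Suc k)"
    using pos_of_rank_inject[of k h "Suc k"] k by simp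
  then have "pos_of_rank h k < pos_of_rank h (Suc k)"
    using gap at_k at_Suc_k by (auto simp: descent_def)
  with at_k at_Suc_k ab show False by simp
qed

lemma highest_weight_first_letter:
  assumes "is_word n h" "highest_weight n h" "0 < length h"
  shows "h ! pos_of_rank h 0 = 1"
proof (rule ccontr)
  let ?i = "h ! pos_of_rank h 0 - 1"
  assume "h ! pos_of_rank h 0 \<noteq> 1"
  moreover have p0: "pos_of_rank h 0 < length h"
    using pos_of_rank_less_length assms(3) .
  ultimately have i: "1 \<le> ?i" "?i < n" "Suc ?i = h ! pos_of_rank h 0"
    using is_word_nth[OF assms(1) p0] by auto
  have "?i \<notin> set h"
  proof
    assume "?i \<in> set h"
    then obtain k where "k < length h" "h ! pos_of_rank h k = ?i"
      by (metis in_set_conv_nth pos_of_rank_surj)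
    then show False
      using same_std_rank_mono(1)[OF same_std_refl, of 0 k h] i by simp
  qed
  then have "\<not> has_pattern ?i h"
    by (simp add: not_has_pattern_if_absent)
  moreover have "Suc ?i \<in> set h"
    using i p0 by (metis nth_mem)
  ultimately show False
    using highest_weight_has_pattern[OF assms(2) i(1,2)] by blast
qed

lemma highest_weight_rank_step:
  assumes "is_word n h" "highest_weight n h" "Suc k < length h"
  shows "h ! pos_of_rank h (Suc k) = h ! pos_of_rank h k + descent h k"
proof (rule ccontr)
  let ?i = "h ! pos_of_rank h (Suc k) - 1"
  have p: "pos_of_rank h k < length h" "pos_of_rank h (Suc k) < length h"
    using pos_of_rank_less_length assms(3) by auto
  have "h ! pos_of_rank h k + descent h k \<le> h ! pos_of_rank h (Suc k)"
    using same_std_refl[of h] assms(3) by (simp add: same_std_iff_steps)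
  moreover assume "h ! pos_of_rank h (Suc k) \<noteq> h ! pos_of_rank h k + descent h k"
  ultimately have gap: "h ! pos_of_rank h k + descent h k < h ! pos_of_rank h (Suc k)"
    by simp
  then have i: "1 \<le> ?i" "?i < n" "Suc ?i = h ! pos_of_rank h (Suc k)"
    using is_word_nth[OF assms(1) p(1)] is_word_nth[OF assms(1) p(2)] by auto
  have "\<not> has_pattern ?i h"
    using no_pattern_at_rank_gap[OF same_std_refl assms(3) gap] gap by simp
  moreover have "Suc ?i \<in> set h"
    using i p by (metis nth_mem)
  ultimately show False
    using highest_weight_has_pattern[OF assms(2) i(1,2)] by blast
qed

lemma lowest_weight_last_letter:
  assumes "same_std h l" "is_word n l" "lowest_weight n l" "0 < length h"
  shows "l ! pos_of_rank h (length h - 1) = n"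
proof (rule ccontr)
  let ?i = "l ! pos_of_rank h (length h - 1)"
  have p: "pos_of_rank h (length h - 1) < length l"
    using pos_of_rank_less_length[of _ h] same_std_length[OF assms(1), symmetric] assms(4) by simp
  assume "?i \<noteq> n"
  then have i: "1 \<le> ?i" "?i < n"
    using is_word_nth[OF assms(2) p] by auto
  have "Suc ?i \<notin> set l"
  proof
    assume "Suc ?i \<in> set l"
    then obtain p where "p < length h" "l ! p = Suc ?i"
      using same_std_length[OF assms(1)] by (auto simp: in_set_conv_nth)
    then obtain k where "k < length h" "l ! pos_of_rank h k = Suc ?i"
      using pos_of_rank_surj by metis
    then show False
      using same_std_rank_mono(1)[OF assms(1), of k "length h - 1"] by fastforce
  qed
  then have "\<not> has_pattern ?i l"
    by (simp add: not_has_pattern_if_absent)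
  moreover have "?i \<in> set l"
    using p by (metis nth_mem)
  ultimately show False
    using lowest_weight_has_pattern[OF assms(3) i(1,2)] by blast
qed

lemma lowest_weight_rank_step:
  assumes "same_std h l" "is_word n l" "lowest_weight n l" "Suc k < length h"
  shows "l ! pos_of_rank h (Suc k) = l ! pos_of_rank h k + descent h k"
proof (rule ccontr)
  let ?i = "l ! pos_of_rank h k"
  have p: "pos_of_rank h k < length l" "pos_of_rank h (Suc k) < length l"
    using pos_of_rank_less_length[of _ h] same_std_length[OF assms(1), symmetric] assms(4) by auto
  have "?i + descent h k \<le> l ! pos_of_rank h (Suc k)"
    using assms(1,4) by (simp add: same_std_iff_steps)
  moreover assume "l ! pos_of_rank h (Suc k) \<noteq> ?i + descent h k"
  ultimately have gap: "?i + descent h k < l ! pos_of_rank h (Suc k)"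
    by simp
  then have i: "1 \<le> ?i" "?i < n"
    using is_word_nth[OF assms(2) p(1)] is_word_nth[OF assms(2) p(2)] by auto
  have "\<not> has_pattern ?i l"
    using no_pattern_at_rank_gap[OF assms(1,4) gap] gap by simp
  moreover have "?i \<in> set l"
    using p by (metis nth_mem)
  ultimately show False
    using lowest_weight_has_pattern[OF assms(3) i(1,2)] by blast
qed

section \<open>The reflection\<close>

definition slack :: "nat \<Rightarrow> nat list \<Rightarrow> nat" where
  "slack n h = n - h ! pos_of_rank h (length h - 1)"

definition rank_of_pos :: "nat list \<Rightarrow> nat \<Rightarrow> nat" where
  "rank_of_pos h = the_inv_into {..<length h} (pos_of_rank h)"

definition mirror :: "nat list \<Rightarrow> nat \<Rightarrow> nat" where
  "mirror h p = pos_of_rank h (length h - 1 - rank_of_pos h p)"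

lemma mirror_pos_of_rank:
  "k < length h \<Longrightarrow> mirror h (pos_of_rank h k) = pos_of_rank h (length h - 1 - k)"
  using the_inv_into_f_f[OF bij_betw_imp_inj_on[OF bij_pos_of_rank], of k h]
  by (simp add: mirror_def rank_of_pos_def)

lemma mirror_less_length:
  assumes "p < length h"
  shows "mirror h p < length h"
proof -
  obtain k where "k < length h" "p = pos_of_rank h k"
    using pos_of_rank_surj[OF assms] by metis
  then show ?thesis
    by (simp add: mirror_pos_of_rank pos_of_rank_less_length)
qed

lemma mirror_mirror:
  assumes "p < length h"
  shows "mirror h (mirror h p) = p"
proof -
  obtain k where "k < length h" "p = pos_of_rank h k"
    using pos_of_rank_surj[OF assms] by metis
  then show ?thesis
    by (simp add: mirror_pos_of_rank)
qed

(* Read along the ranks of h, a word u of the component exceeds h by a weakly increasing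
   sequence d_0 <= ... <= d_(m-1) with values in 0..slack n h; reflect n h u is the word
   whose sequence is slack n h - d_(m-1), ..., slack n h - d_0. *)
definition reflect :: "nat \<Rightarrow> nat list \<Rightarrow> nat list \<Rightarrow> nat list" where
  "reflect n h u =
     map (\<lambda>p. h ! p + slack n h + h ! mirror h p - u ! mirror h p) [0..<length h]"

lemma length_reflect [simp]: "length (reflect n h u) = length h"
  by (simp add: reflect_def)

lemma reflect_nth:
  "p < length h \<Longrightarrow> reflect n h u ! p = h ! p + slack n h + h ! mirror h p - u ! mirror h p"
  by (simp add: reflect_def)

context
  fixes n :: nat and h :: "nat list"
  assumes word: "is_word n h" and highest: "highest_weight n h"
begin

lemma rank_letter_lower:
  assumes "same_std h u" "is_word n u" "k < length h"
  shows "h ! pos_of_rank h k \<le> u ! pos_of_rank h k"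
  using assms(3)
proof (induction k)
  case 0
  have "pos_of_rank h 0 < length u"
    using pos_of_rank_less_length[OF 0] same_std_length[OF assms(1)] by simp
  then show ?case
    using highest_weight_first_letter[OF word highest 0] is_word_nth[OF assms(2)] by simp
next
  case (Suc k)
  then show ?case
    using highest_weight_rank_step[OF word highest Suc.prems] assms(1)
    by (force simp: same_std_iff_steps)
qed

lemma rank_letter_upper:
  assumes "same_std h u" "is_word n u" "k < length h"
  shows "u ! pos_of_rank h k \<le> h ! pos_of_rank h k + slack n h"
proof -
  have "k \<le> length h - 1"
    using assms(3) by simp
  then show ?thesis
  proof (induction k rule: inc_induct)
    case base
    have "pos_of_rank h (length h - 1) < length h"
      using pos_of_rank_less_length assms(3) by simp
    then show ?case
      using is_word_nth[OF word] is_word_nth[OF assms(2)] same_std_length[OF assms(1)]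
      by (simp add: slack_def)
  next
    case (step k)
    then have "Suc k < length h"
      by simp
    then show ?case
      using step.IH highest_weight_rank_step[OF word highest] assms(1)
      by (force simp: same_std_iff_steps)
  qed
qed

lemma lowest_weight_rank_letter:
  assumes "same_std h l" "is_word n l" "lowest_weight n l" "k < length h"
  shows "l ! pos_of_rank h k = h ! pos_of_rank h k + slack n h"
proof -
  have "k \<le> length h - 1"
    using assms(4) by simp
  then show ?thesis
  proof (induction k rule: inc_induct)
    case base
    have "0 < length h"
      using assms(4) by linarith
    then have "pos_of_rank h (length h - 1) < length h"
      "l ! pos_of_rank h (length h - 1) = n"
      using pos_of_rank_less_length lowest_weight_last_letter[OF assms(1-3)] by auto
    then show ?case
      using is_word_nth[OF word] by (simp add: slack_def)
  next
    case (step k)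
    then have "Suc k < length h"
      by simp
    then show ?case
      using step.IH highest_weight_rank_step[OF word highest]
        lowest_weight_rank_step[OF assms(1-3)] by simp
  qed
qed

lemma letter_bounds:
  assumes "same_std h u" "is_word n u" "p < length h"
  shows "h ! p \<le> u ! p" "u ! p \<le> h ! p + slack n h"
proof -
  obtain k where "k < length h" "p = pos_of_rank h k"
    using pos_of_rank_surj[OF assms(3)] by metis
  then show "h ! p \<le> u ! p" "u ! p \<le> h ! p + slack n h"
    using rank_letter_lower[OF assms(1,2)] rank_letter_upper[OF assms(1,2)] by simp_all
qed

lemma letter_plus_slack_le:
  assumes "p < length h"
  shows "h ! p + slack n h \<le> n"
proof -
  obtain k where k: "k < length h" "p = pos_of_rank h k"
    using pos_of_rank_surj[OF assms] by metis
  have "h ! p \<le> h ! pos_of_rank h (length h - 1)"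
    using same_std_rank_mono(1)[OF same_std_refl, of k "length h - 1" h] k by simp
  moreover have "h ! pos_of_rank h (length h - 1) \<le> n"
    using is_word_nth[OF word] pos_of_rank_less_length[of "length h - 1" h] k(1) by simp
  ultimately show ?thesis
    by (simp add: slack_def)
qed

lemma reflect_highest_weight:
  assumes "same_std h l" "is_word n l" "lowest_weight n l"
  shows "reflect n h h = l"
proof (rule nth_equalityI)
  show "length (reflect n h h) = length l"
    using same_std_length[OF assms(1)] by simp
  fix p assume "p < length (reflect n h h)"
  then have p: "p < length h"
    by simp
  then obtain k where "k < length h" "p = pos_of_rank h k"
    using pos_of_rank_surj by metis
  then show "reflect n h h ! p = l ! p"
    using reflect_nth[OF p] lowest_weight_rank_letter[OF assms] by simp
qed

lemma reflect_reflect: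
  assumes "same_std h u" "is_word n u"
  shows "reflect n h (reflect n h u) = u"
proof (rule nth_equalityI)
  show "length (reflect n h (reflect n h u)) = length u"
    using same_std_length[OF assms(1)] by simp
  fix p assume "p < length (reflect n h (reflect n h u))"
  then have p: "p < length h"
    by simp
  then show "reflect n h (reflect n h u) ! p = u ! p"
    using reflect_nth[OF p] reflect_nth[OF mirror_less_length[OF p]] mirror_mirror[OF p]
      letter_bounds(2)[OF assms p] by simp
qed

lemma is_word_reflect:
  assumes "same_std h u" "is_word n u"
  shows "is_word n (reflect n h u)"
  unfolding is_word_def
proof
  fix x assume "x \<in> set (reflect n h u)"
  then obtain p where p: "p < length h" and x: "x = reflect n h u ! p"
    by (auto simp: in_set_conv_nth)
  have "1 \<le> h ! p"
    using is_word_nth[OF word p] by simp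
  moreover have "h ! mirror h p \<le> u ! mirror h p" "u ! mirror h p \<le> h ! mirror h p + slack n h"
    using letter_bounds[OF assms mirror_less_length[OF p]] by simp_all
  moreover have "x = h ! p + slack n h + h ! mirror h p - u ! mirror h p"
    using x reflect_nth[OF p] by simp
  ultimately show "x \<in> {1..n}"
    using letter_plus_slack_le[OF p] by simp linarith
qed

lemma same_std_reflect:
  assumes "same_std h u" "is_word n u"
  shows "same_std h (reflect n h u)"
  unfolding same_std_iff_steps
proof (intro conjI allI impI)
  fix k assume k: "Suc k < length h"
  define j where "j = length h - 2 - k"
  have j: "Suc j < length h" "length h - 1 - k = Suc j" "length h - 1 - Suc k = j"
    using k by (auto simp: j_def)
  have step_h: "h ! pos_of_rank h (Suc i) = h ! pos_of_rank h i + descent h i"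
    if "Suc i < length h" for i
    using highest_weight_rank_step[OF word highest that] .
  have step_u: "u ! pos_of_rank h j + descent h j \<le> u ! pos_of_rank h (Suc j)"
    using assms(1) j(1) by (simp add: same_std_iff_steps)
  have upper: "u ! pos_of_rank h j \<le> h ! pos_of_rank h j + slack n h"
    "u ! pos_of_rank h (Suc j) \<le> h ! pos_of_rank h (Suc j) + slack n h"
    using rank_letter_upper[OF assms] j(1) by simp_all
  show "reflect n h u ! pos_of_rank h k + descent h k \<le> reflect n h u ! pos_of_rank h (Suc k)"
    using reflect_nth[OF pos_of_rank_less_length, of k h]
      reflect_nth[OF pos_of_rank_less_length, of "Suc k" h]
      mirror_pos_of_rank[of k h] mirror_pos_of_rank[of "Suc k" h] k j
      step_h[OF k] step_h[OF j(1)] step_u upper by simp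
qed simp

lemma reflect_increment:
  assumes v: "same_std h v" "is_word n v" and p: "p < length h"
    and increment: "v = u[p := Suc (u ! p)]"
  shows "reflect n h u = (reflect n h v)[mirror h p := Suc (reflect n h v ! mirror h p)]"
proof (rule nth_equalityI)
  fix q assume "q < length (reflect n h u)"
  then have q: "q < length h"
    by simp
  have "v ! p \<le> h ! p + slack n h"
    using letter_bounds(2)[OF v p] .
  moreover have "mirror h q = p \<longleftrightarrow> q = mirror h p"
    using mirror_mirror p q by metis
  ultimately show
    "reflect n h u ! q = (reflect n h v)[mirror h p := Suc (reflect n h v ! mirror h p)] ! q"
    using reflect_nth[OF q] increment p q same_std_length[OF v(1)] by auto
qed simp

lemma hypo_edge_reflect:
  assumes u: "same_std h u" "is_word n u" and v: "same_std h v" "is_word n v"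
    and "hypo_edge n u v"
  shows "hypo_edge n (reflect n h v) (reflect n h u)"
proof -
  have "same_std u v"
    using same_std_trans[OF same_std_sym[OF u(1)] v(1)] .
  then obtain p where p: "p < length u" and increment: "u[p := Suc (u ! p)] = v"
    using hypo_edge_iff_increment[OF u(2) v(2)] assms(5) by metis
  have "p < length h"
    using p same_std_length[OF u(1)] by simp
  moreover have "same_std (reflect n h v) (reflect n h u)"
    using same_std_trans[OF same_std_sym[OF same_std_reflect[OF v]] same_std_reflect[OF u]] .
  ultimately show ?thesis
    using hypo_edge_iff_increment[OF is_word_reflect[OF v] is_word_reflect[OF u]]
      reflect_increment[OF v _ increment[symmetric]] mirror_less_length by auto
qed

lemma hypo_adj_reflect:
  assumes "same_std h u" "is_word n u" "same_std h v" "is_word n v" "hypo_adj n u v"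
  shows "hypo_adj n (reflect n h u) (reflect n h v)"
  using assms hypo_edge_reflect[of u v] hypo_edge_reflect[of v u] by (auto simp: hypo_adj_def)

lemma reachable_same_std_word:
  assumes "(h, v) \<in> {(a, b). hypo_adj n a b}\<^sup>*"
  shows "same_std h v \<and> is_word n v"
  using rtrancl_closed_set[OF assms, of "{u. same_std h u \<and> is_word n u}"] word
    same_std_refl same_std_trans hypo_adj_same_std hypo_adj_is_word
  by blast

lemma reflect_is_undirected_aut:
  assumes "(h, reflect n h h) \<in> {(a, b). hypo_adj n a b}\<^sup>*"
  shows "is_undirected_aut n {v. (h, v) \<in> {(a, b). hypo_adj n a b}\<^sup>*} (reflect n h)"
  unfolding is_undirected_aut_def
proof (rule involution_automorphism_of_reach_set[where W = "{u. same_std h u \<and> is_word n u}"])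
  fix a assume "a \<in> {u. same_std h u \<and> is_word n u}"
  then show "reflect n h (reflect n h a) = a"
    using reflect_reflect by simp
next
  fix a b assume "a \<in> {u. same_std h u \<and> is_word n u}" "b \<in> {u. same_std h u \<and> is_word n u}"
    and "hypo_adj n a b"
  then show "hypo_adj n (reflect n h a) (reflect n h b)"
    using hypo_adj_reflect by simp
qed (use assms word same_std_refl same_std_trans hypo_adj_same_std hypo_adj_is_word in auto)

end

theorem corollary4p8:
  fixes n :: nat and C :: "nat list set" and h l :: "nat list"
  assumes "n \<ge> 1"
    and "hypo_component n C"
    and "h \<in> C" and "highest_weight n h"
    and "l \<in> C" and "lowest_weight n l"
  shows "\<exists>\<phi>. is_undirected_aut n C \<phi> \<and> \<phi> h = l"
proof -
  note C = hypo_component_generated_by_member[OF assms(2,3)]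
  have "(h, l) \<in> {(a, b). hypo_adj n a b}\<^sup>*"
    using assms(5) C(2) by simp
  moreover have "reflect n h h = l"
    using reflect_highest_weight[OF C(1) assms(4)] reachable_same_std_word[OF C(1) assms(4)]
      calculation assms(6) by blast
  ultimately show ?thesis
    using reflect_is_undirected_aut[OF C(1) assms(4)] C(2) by auto
qed

end
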